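(* Let $0<m<L$, $\kappa=L/m$, $\delta\in(0,1)$, $\alpha>0$, and $\rho_\mathrm{GD}(\delta)=\max(1-\alpha m(1-\delta),\ \alpha L(1+\delta)-1)$. Define \[ F(t,\lambda) = -\alpha^2(L-m)^2+2mL\alpha^2\lambda(1-\delta^2) +2\alpha\lambda(m+L)(t-1) + \lambda(2-\delta^2\lambda)(t-1)^2 \] and \[ \rho_\star=\inf\{\rho\ge\rho_\mathrm{GD}(\delta):\ F(\rho,\lambda)\ge0 \text{ and } F(-\rho,\lambda)\ge0 \text{ for some }\lambda\in[0,2/\delta^2]\}. \] Then $\rho_\star=\rho_\mathrm{GD}(\delta)$ if and only if one of the following holds: (1) $\delta<2/(\kappa+1)$ and $\alpha\le \alpha_-:=\frac{1}{1-\delta}\left(\frac{2}{L+m}-\frac{\delta}{m}\right)$; (2) $\delta\in[0,1)$ and $\alpha\ge\alpha_+:=\frac{1}{1+\delta}\left(\frac{2}{L+m}+\frac{\delta}{L}\right)$. *)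

theory Defs
  imports Complex_Main
begin

definition rho_GD :: "real \<Rightarrow> real \<Rightarrow> real \<Rightarrow> real \<Rightarrow> real" where
  "rho_GD m L \<alpha> \<delta> = max (1 - \<alpha> * m * (1 - \<delta>)) (\<alpha> * L * (1 + \<delta>) - 1)"

definition Ffun :: "real \<Rightarrow> real \<Rightarrow> real \<Rightarrow> real \<Rightarrow> real \<Rightarrow> real \<Rightarrow> real" where
  "Ffun m L \<alpha> \<delta> t lam =
     - (\<alpha>^2 * (L - m)^2) + 2 * m * L * \<alpha>^2 * lam * (1 - \<delta>^2)
     + 2 * \<alpha> * lam * (m + L) * (t - 1) + lam * (2 - \<delta>^2 * lam) * (t - 1)^2"

definition rho_star :: "real \<Rightarrow> real \<Rightarrow> real \<Rightarrow> real \<Rightarrow> real" where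
  "rho_star m L \<alpha> \<delta> = Inf {\<rho>. \<rho> \<ge> rho_GD m L \<alpha> \<delta> \<and>
      (\<exists>lam\<in>{0..2 / \<delta>^2}. Ffun m L \<alpha> \<delta> \<rho> lam \<ge> 0 \<and> Ffun m L \<alpha> \<delta> (-\<rho>) lam \<ge> 0)}"

end

theory Submission
  imports Defs "HOL-Analysis.Analysis"
begin

(* Rescaling by \<alpha> reduces everything to \<alpha> = 1 with a = \<alpha> m, b = \<alpha> L. The set of certified
   rates is closed (a projection along the compact multiplier interval) and contains all large
   rates, so the infimum equals rho_GD exactly when rho_GD itself is certified. Now rho_GD = |1 - x|
   for the active step factor x \<in> {a(1 - \<delta>), b(1 + \<delta>)}, where F(1 - x, \<lambda>) is minus a square;
   this forces \<lambda> = (b - a) / (\<delta> x), and then F(x - 1, \<lambda>) has the sign of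
   -(1 - x)(x(a + b - 2) + \<delta>(b - a)). For the two choices of x this sign condition is
   \<alpha> \<le> \<alpha>_- resp. \<alpha> \<ge> \<alpha>_+. *)

definition certified_rate :: "real \<Rightarrow> real \<Rightarrow> real \<Rightarrow> real \<Rightarrow> real \<Rightarrow> bool" where
  "certified_rate m L \<alpha> \<delta> \<rho> \<longleftrightarrow>
     (\<exists>lam\<in>{0..2 / \<delta>^2}. 0 \<le> Ffun m L \<alpha> \<delta> \<rho> lam \<and> 0 \<le> Ffun m L \<alpha> \<delta> (-\<rho>) lam)"

lemma certified_rate_uminus: "certified_rate m L \<alpha> \<delta> (-\<rho>) \<longleftrightarrow> certified_rate m L \<alpha> \<delta> \<rho>"
  unfolding certified_rate_def by auto

lemma Ffun_scale: "Ffun m L \<alpha> \<delta> t lam = Ffun (\<alpha> * m) (\<alpha> * L) 1 \<delta> t lam"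
  unfolding Ffun_def by (simp add: power2_eq_square algebra_simps)

lemma rho_GD_scale: "rho_GD m L \<alpha> \<delta> = rho_GD (\<alpha> * m) (\<alpha> * L) 1 \<delta>"
  unfolding rho_GD_def by (simp add: mult.commute)

lemma certified_rate_scale:
  "certified_rate m L \<alpha> \<delta> \<rho> \<longleftrightarrow> certified_rate (\<alpha> * m) (\<alpha> * L) 1 \<delta> \<rho>"
  unfolding certified_rate_def Ffun_scale[of m L \<alpha>] ..

lemma closed_certified_rate: "closed {\<rho>. certified_rate m L \<alpha> \<delta> \<rho>}"
proof -
  have "{\<rho>. certified_rate m L \<alpha> \<delta> \<rho>} =
      {\<rho>. \<exists>lam. lam \<in> {0..2 / \<delta>^2} \<and>
         (lam, \<rho>) \<in> {p. 0 \<le> Ffun m L \<alpha> \<delta> (snd p) (fst p) \<and> 0 \<le> Ffun m L \<alpha> \<delta> (- snd p) (fst p)}}"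
    unfolding certified_rate_def by auto
  also have "closed \<dots>"
    by (intro closed_compact_projection compact_Icc closed_Collect_conj closed_Collect_le
        continuous_on_const) (simp_all add: Ffun_def continuous_intros)
  finally show ?thesis .
qed

lemma Inf_eq_lower_bound_iff:
  fixes S :: "real set"
  assumes "closed S" "S \<noteq> {}" "\<And>x. x \<in> S \<Longrightarrow> r \<le> x"
  shows "Inf S = r \<longleftrightarrow> r \<in> S"
proof
  assume "Inf S = r"
  then show "r \<in> S"
    using closed_contains_Inf[of S] assms by (metis bdd_belowI)
next
  assume "r \<in> S"
  then show "Inf S = r"
    using assms(3) by (rule cInf_eq_minimum)
qed

lemma rho_star_eq_rho_GD_iff:
  assumes "rho_GD m L \<alpha> \<delta> \<le> \<rho>" "certified_rate m L \<alpha> \<delta> \<rho>"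
  shows "rho_star m L \<alpha> \<delta> = rho_GD m L \<alpha> \<delta> \<longleftrightarrow> certified_rate m L \<alpha> \<delta> (rho_GD m L \<alpha> \<delta>)"
proof -
  let ?S = "{\<rho>. rho_GD m L \<alpha> \<delta> \<le> \<rho> \<and> certified_rate m L \<alpha> \<delta> \<rho>}"
  have "rho_star m L \<alpha> \<delta> = Inf ?S"
    unfolding rho_star_def certified_rate_def ..
  moreover have "closed ?S"
    using closed_Int[OF closed_atLeast closed_certified_rate]
    by (simp add: atLeast_def Collect_conj_eq)
  ultimately show ?thesis
    using Inf_eq_lower_bound_iff[of ?S] assms by auto
qed

lemma Ffun_nonneg_far:
  fixes a b \<delta> t :: real
  assumes "0 \<le> a" "0 \<le> b" "\<delta>^2 \<le> 1" "3 * (a + b) \<le> \<bar>t - 1\<bar>"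
  shows "0 \<le> Ffun a b 1 \<delta> t 1"
proof -
  define s where "s = t - 1"
  have "Ffun a b 1 \<delta> t 1 = - ((b - a)^2) + 2 * a * b * (1 - \<delta>^2) + 2 * ((a + b) * s) + (2 - \<delta>^2) * s^2"
    unfolding Ffun_def s_def by simp
  moreover have "(b - a)^2 \<le> (a + b)^2"
    using assms by (simp add: power2_eq_square algebra_simps)
  moreover have "0 \<le> 2 * a * b * (1 - \<delta>^2)"
    using assms by simp
  moreover have "s^2 \<le> (2 - \<delta>^2) * s^2"
    using mult_right_mono[of 1 "2 - \<delta>^2" "s^2"] assms by simp
  moreover have "- ((a + b) * \<bar>s\<bar>) \<le> (a + b) * s"
    using mult_left_mono[of "- \<bar>s\<bar>" s "a + b"] assms by simp
  moreover have "3 * ((a + b) * \<bar>s\<bar>) \<le> s^2"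
    using mult_right_mono[OF assms(4), of "\<bar>s\<bar>"] by (simp add: s_def power2_eq_square algebra_simps)
  moreover have "3 * (a + b)^2 \<le> (a + b) * \<bar>s\<bar>"
    using mult_left_mono[OF assms(4), of "a + b"] assms by (simp add: s_def power2_eq_square algebra_simps)
  ultimately show ?thesis
    using zero_le_power2[of "a + b"] by linarith
qed

lemma ex_certified_rate_ge:
  fixes a b \<delta> r :: real
  assumes "0 \<le> a" "0 \<le> b" "0 < \<delta>" "\<delta> \<le> 1"
  shows "\<exists>\<rho>\<ge>r. certified_rate a b 1 \<delta> \<rho>"
proof (intro exI conjI)
  let ?\<rho> = "max r (1 + 3 * (a + b))"
  have "\<delta>^2 \<le> 1"
    using assms by (simp add: power_le_one)
  then have "1 \<in> {0..2 / \<delta>^2}"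
    using assms by (simp add: field_simps)
  moreover have "0 \<le> Ffun a b 1 \<delta> ?\<rho> 1" "0 \<le> Ffun a b 1 \<delta> (- ?\<rho>) 1"
    using assms \<open>\<delta>^2 \<le> 1\<close> by (intro Ffun_nonneg_far; simp)+
  ultimately show "certified_rate a b 1 \<delta> ?\<rho>"
    unfolding certified_rate_def by blast
qed simp

lemma Ffun_one_minus:
  "Ffun a b 1 \<delta> (1 - x) lam =
     2 * lam * (x - a * (1 - \<delta>)) * (x - b * (1 + \<delta>)) - (\<delta> * x * lam - (b - a))^2"
  unfolding Ffun_def by (simp add: power2_eq_square algebra_simps)

lemma Ffun_uminus:
  "Ffun a b 1 \<delta> (-t) lam = Ffun a b 1 \<delta> t lam - 4 * lam * t * (a + b - 2 + \<delta>^2 * lam)"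
  unfolding Ffun_def by (simp add: power2_eq_square algebra_simps)

lemma certified_rate_one_minus_root_iff:
  fixes a b \<delta> x :: real
  assumes "a < b" "0 < \<delta>" "0 < x" "(x - a * (1 - \<delta>)) * (x - b * (1 + \<delta>)) = 0"
  shows "certified_rate a b 1 \<delta> (1 - x) \<longleftrightarrow>
    \<delta> * (b - a) \<le> 2 * x \<and> (1 - x) * (x * (a + b - 2) + \<delta> * (b - a)) \<le> 0"
proof -
  define lam0 where "lam0 = (b - a) / (\<delta> * x)"
  have lam0_pos: "0 < lam0"
    using assms by (simp add: lam0_def)
  have lam0_eq: "\<delta> * x * lam0 = b - a"
    using assms by (simp add: lam0_def)
  have F_root: "Ffun a b 1 \<delta> (1 - x) lam = - ((\<delta> * x * lam - (b - a))^2)" for lam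
    using Ffun_one_minus[of a b \<delta> x lam] assms(4) by simp
  have "0 \<le> Ffun a b 1 \<delta> (1 - x) lam \<longleftrightarrow> \<delta> * x * lam = b - a" for lam
    unfolding F_root by simp
  also have "\<delta> * x * lam = b - a \<longleftrightarrow> lam = lam0" for lam
    using assms by (auto simp: lam0_def field_simps)
  finally have forced: "0 \<le> Ffun a b 1 \<delta> (1 - x) lam \<longleftrightarrow> lam = lam0" for lam .
  then have "certified_rate a b 1 \<delta> (1 - x) \<longleftrightarrow> lam0 \<le> 2 / \<delta>^2 \<and> 0 \<le> Ffun a b 1 \<delta> (x - 1) lam0"
    unfolding certified_rate_def using lam0_pos by auto
  also have "lam0 \<le> 2 / \<delta>^2 \<longleftrightarrow> \<delta> * (\<delta> * (b - a)) \<le> \<delta> * (2 * x)"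
    using assms by (simp add: lam0_def field_simps power2_eq_square)
  also have "\<dots> \<longleftrightarrow> \<delta> * (b - a) \<le> 2 * x"
    using assms by simp
  also have "0 \<le> Ffun a b 1 \<delta> (x - 1) lam0 \<longleftrightarrow> (1 - x) * (x * (a + b - 2) + \<delta> * (b - a)) \<le> 0"
  proof -
    have F_eq: "Ffun a b 1 \<delta> (x - 1) lam0 = - 4 * lam0 * (1 - x) * (a + b - 2 + \<delta>^2 * lam0)"
      using Ffun_uminus[of a b \<delta> "1 - x" lam0] by (simp add: F_root lam0_eq)
    have "x * Ffun a b 1 \<delta> (x - 1) lam0 =
        - (4 * lam0 * ((1 - x) * (x * (a + b - 2) + \<delta> * (b - a))))"
      unfolding F_eq using lam0_eq by algebra
    moreover have "0 \<le> Ffun a b 1 \<delta> (x - 1) lam0 \<longleftrightarrow> 0 \<le> x * Ffun a b 1 \<delta> (x - 1) lam0"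
      using assms by (simp add: zero_le_mult_iff)
    ultimately show ?thesis
      using lam0_pos by (simp add: mult_le_0_iff)
  qed
  finally show ?thesis .
qed

lemma two_less_add_if_add_less_twice_mult:
  fixes a b :: real
  assumes "0 \<le> a" "0 \<le> b" "a + b < 2 * a * b"
  shows "2 < a + b"
proof -
  have "0 < a + b"
    using assms by (cases "a = 0") auto
  moreover have "4 * a * b \<le> (a + b)^2"
    using zero_le_power2[of "a - b"] by (simp add: power2_eq_square algebra_simps)
  then have "2 * (a + b) < (a + b) * (a + b)"
    using assms(3) by (simp add: power2_eq_square)
  ultimately show ?thesis
    using mult_less_cancel_right_pos[of "a + b" 2 "a + b"] by simp
qed

lemma lower_condition_imp_lower_branch:
  fixes a b \<delta> :: real
  assumes "0 < a" "a < b" "0 < \<delta>" "\<delta> < 1"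
    and "a * (1 - \<delta>) * (a + b - 2) + \<delta> * (b - a) \<le> 0"
  shows "b * (1 + \<delta>) - 1 \<le> 1 - a * (1 - \<delta>)"
proof (cases "2 * a * b \<le> a + b")
  case True
  have "a * ((1 - a * (1 - \<delta>)) - (b * (1 + \<delta>) - 1)) =
      \<delta> * (a + b - 2 * a * b) - (a * (1 - \<delta>) * (a + b - 2) + \<delta> * (b - a))"
    by algebra
  also have "0 \<le> \<dots>"
    using True assms mult_nonneg_nonneg[of \<delta> "a + b - 2 * a * b"] by linarith
  finally show ?thesis
    using assms by (simp add: zero_le_mult_iff)
next
  case False
  then have "2 < a + b"
    using assms by (intro two_less_add_if_add_less_twice_mult) auto
  then have "0 < a * (1 - \<delta>) * (a + b - 2) + \<delta> * (b - a)"
    using assms by (intro add_pos_pos mult_pos_pos) auto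
  with assms(5) show ?thesis
    by simp
qed

lemma upper_condition_imp_upper_branch:
  fixes a b \<delta> :: real
  assumes "0 < a" "a < b" "0 < \<delta>"
    and "0 \<le> b * (1 + \<delta>) * (a + b - 2) + \<delta> * (b - a)"
  shows "1 - a * (1 - \<delta>) \<le> b * (1 + \<delta>) - 1"
proof (cases "2 * a * b \<le> a + b")
  case True
  have "b * ((b * (1 + \<delta>) - 1) - (1 - a * (1 - \<delta>))) =
      \<delta> * (a + b - 2 * a * b) + (b * (1 + \<delta>) * (a + b - 2) + \<delta> * (b - a))"
    by algebra
  also have "0 \<le> \<dots>"
    using True assms by simp
  finally show ?thesis
    using assms by (simp add: zero_le_mult_iff)
next
  case False
  then have "2 < a + b"
    using assms by (intro two_less_add_if_add_less_twice_mult) auto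
  moreover have "0 \<le> \<delta> * (b - a)"
    using assms by simp
  ultimately show ?thesis
    by (simp add: algebra_simps)
qed

lemma certified_rate_lower_iff:
  fixes a b \<delta> :: real
  assumes "0 < a" "a < b" "0 < \<delta>" "\<delta> < 1" "a * (1 - \<delta>) < 1"
  shows "certified_rate a b 1 \<delta> (1 - a * (1 - \<delta>)) \<longleftrightarrow>
    a * (1 - \<delta>) * (a + b - 2) + \<delta> * (b - a) \<le> 0"
proof -
  let ?c = "a * (1 - \<delta>)"
  have "certified_rate a b 1 \<delta> (1 - ?c) \<longleftrightarrow>
      \<delta> * (b - a) \<le> 2 * ?c \<and> (1 - ?c) * (?c * (a + b - 2) + \<delta> * (b - a)) \<le> 0"
    using assms by (intro certified_rate_one_minus_root_iff) auto
  moreover have "(1 - ?c) * (?c * (a + b - 2) + \<delta> * (b - a)) \<le> 0 \<longleftrightarrow> ?c * (a + b - 2) + \<delta> * (b - a) \<le> 0"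
    using assms(5) by (simp add: mult_le_0_iff)
  moreover have "?c * (a + b - 2) + \<delta> * (b - a) \<le> 0 \<Longrightarrow> \<delta> * (b - a) \<le> 2 * ?c"
    using assms mult_nonneg_nonneg[of ?c "a + b"] by (simp add: algebra_simps)
  ultimately show ?thesis
    by blast
qed

lemma certified_rate_upper_iff:
  fixes a b \<delta> :: real
  assumes "0 < a" "a < b" "0 < \<delta>" "\<delta> < 1" "1 < b * (1 + \<delta>)"
  shows "certified_rate a b 1 \<delta> (b * (1 + \<delta>) - 1) \<longleftrightarrow>
    0 \<le> b * (1 + \<delta>) * (a + b - 2) + \<delta> * (b - a)"
proof -
  let ?e = "b * (1 + \<delta>)"
  have "\<delta> * (b - a) \<le> 2 * ?e"
    using assms mult_left_le_one_le[of "b - a" \<delta>] by (simp add: algebra_simps)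
  moreover have "certified_rate a b 1 \<delta> (1 - ?e) \<longleftrightarrow>
      \<delta> * (b - a) \<le> 2 * ?e \<and> (1 - ?e) * (?e * (a + b - 2) + \<delta> * (b - a)) \<le> 0"
    using assms by (intro certified_rate_one_minus_root_iff) auto
  moreover have "(1 - ?e) * (?e * (a + b - 2) + \<delta> * (b - a)) \<le> 0 \<longleftrightarrow> 0 \<le> ?e * (a + b - 2) + \<delta> * (b - a)"
    using assms(5) by (simp add: mult_le_0_iff)
  ultimately show ?thesis
    using certified_rate_uminus[of a b 1 \<delta> "1 - ?e"] by simp
qed

lemma certified_rate_rho_GD_iff:
  fixes a b \<delta> :: real
  assumes "0 < a" "a < b" "0 < \<delta>" "\<delta> < 1"
  shows "certified_rate a b 1 \<delta> (rho_GD a b 1 \<delta>) \<longleftrightarrow>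
    a * (1 - \<delta>) * (a + b - 2) + \<delta> * (b - a) \<le> 0 \<or> 0 \<le> b * (1 + \<delta>) * (a + b - 2) + \<delta> * (b - a)"
    (is "_ \<longleftrightarrow> ?lower \<or> ?upper")
proof -
  let ?c = "a * (1 - \<delta>)" and ?e = "b * (1 + \<delta>)"
  have rho: "rho_GD a b 1 \<delta> = max (1 - ?c) (?e - 1)"
    unfolding rho_GD_def by simp
  have "(1 - ?c) + (?e - 1) = (b - a) + \<delta> * a + \<delta> * b"
    by (simp add: algebra_simps)
  then have gap: "0 < (1 - ?c) + (?e - 1)"
    using assms mult_pos_pos[of \<delta> a] mult_pos_pos[of \<delta> b] by linarith
  show ?thesis
  proof
    assume cert: "certified_rate a b 1 \<delta> (rho_GD a b 1 \<delta>)"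
    show "?lower \<or> ?upper"
    proof (cases "?e - 1 \<le> 1 - ?c")
      case True
      then show ?thesis
        using cert gap certified_rate_lower_iff[OF assms] by (simp add: rho max_absorb1)
    next
      case False
      then show ?thesis
        using cert gap certified_rate_upper_iff[OF assms] by (simp add: rho max_absorb2)
    qed
  next
    assume "?lower \<or> ?upper"
    then show "certified_rate a b 1 \<delta> (rho_GD a b 1 \<delta>)"
    proof
      assume ?lower
      moreover from this have "?e - 1 \<le> 1 - ?c"
        by (rule lower_condition_imp_lower_branch[OF assms])
      ultimately show ?thesis
        using gap certified_rate_lower_iff[OF assms] by (simp add: rho max_absorb1)
    next
      assume ?upper
      moreover from this have "1 - ?c \<le> ?e - 1"
        by (rule upper_condition_imp_upper_branch[OF assms(1-3)])
      ultimately show ?thesis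
        using gap certified_rate_upper_iff[OF assms] by (simp add: rho max_absorb2)
    qed
  qed
qed

lemma alpha_le_alpha_minus_iff:
  fixes m L \<alpha> \<delta> :: real
  assumes "0 < m" "0 < L" "\<delta> < 1" "0 < \<alpha>"
  shows "(\<delta> < 2 / (L / m + 1) \<and> \<alpha> \<le> (1 / (1 - \<delta>)) * (2 / (L + m) - \<delta> / m)) \<longleftrightarrow>
    \<alpha> * m * (1 - \<delta>) * (\<alpha> * m + \<alpha> * L - 2) + \<delta> * (\<alpha> * L - \<alpha> * m) \<le> 0"
proof -
  have pos: "0 < (1 - \<delta>) * m * (L + m)"
    using assms by simp
  have "(1 / (1 - \<delta>)) * (2 / (L + m) - \<delta> / m) = (2 * m - \<delta> * (L + m)) / ((1 - \<delta>) * m * (L + m))"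
    using assms by (simp add: field_simps)
  then have "\<alpha> \<le> (1 / (1 - \<delta>)) * (2 / (L + m) - \<delta> / m) \<longleftrightarrow>
      \<alpha> * ((1 - \<delta>) * m * (L + m)) \<le> 2 * m - \<delta> * (L + m)"
    using pos by (simp add: le_divide_eq)
  moreover have "\<alpha> * ((1 - \<delta>) * m * (L + m)) \<le> 2 * m - \<delta> * (L + m) \<Longrightarrow> \<delta> < 2 / (L / m + 1)"
    using assms pos mult_pos_pos[OF assms(4) pos] by (simp add: field_simps)
  moreover have "\<alpha> * m * (1 - \<delta>) * (\<alpha> * m + \<alpha> * L - 2) + \<delta> * (\<alpha> * L - \<alpha> * m) =
      \<alpha> * (\<alpha> * ((1 - \<delta>) * m * (L + m)) - (2 * m - \<delta> * (L + m)))"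
    by algebra
  ultimately show ?thesis
    using assms(4) by (auto simp: mult_le_0_iff)
qed

lemma alpha_ge_alpha_plus_iff:
  fixes m L \<alpha> \<delta> :: real
  assumes "0 < m" "0 < L" "0 \<le> \<delta>" "0 < \<alpha>"
  shows "\<alpha> \<ge> (1 / (1 + \<delta>)) * (2 / (L + m) + \<delta> / L) \<longleftrightarrow>
    0 \<le> \<alpha> * L * (1 + \<delta>) * (\<alpha> * m + \<alpha> * L - 2) + \<delta> * (\<alpha> * L - \<alpha> * m)"
proof -
  have pos: "0 < (1 + \<delta>) * L * (L + m)"
    using assms by simp
  have "(1 / (1 + \<delta>)) * (2 / (L + m) + \<delta> / L) = (2 * L + \<delta> * (L + m)) / ((1 + \<delta>) * L * (L + m))"
    using assms by (simp add: field_simps)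
  then have "\<alpha> \<ge> (1 / (1 + \<delta>)) * (2 / (L + m) + \<delta> / L) \<longleftrightarrow>
      2 * L + \<delta> * (L + m) \<le> \<alpha> * ((1 + \<delta>) * L * (L + m))"
    using pos by (simp add: divide_le_eq)
  moreover have "\<alpha> * L * (1 + \<delta>) * (\<alpha> * m + \<alpha> * L - 2) + \<delta> * (\<alpha> * L - \<alpha> * m) =
      \<alpha> * (\<alpha> * ((1 + \<delta>) * L * (L + m)) - (2 * L + \<delta> * (L + m)))"
    by algebra
  ultimately show ?thesis
    using assms(4) by (auto simp: zero_le_mult_iff)
qed

theorem lemma3p2:
  fixes m L \<alpha> \<delta> :: real
  assumes "0 < m" "m < L" "0 < \<delta>" "\<delta> < 1" "0 < \<alpha>"
  shows "rho_star m L \<alpha> \<delta> = rho_GD m L \<alpha> \<delta> \<longleftrightarrow>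
    ((\<delta> < 2 / (L / m + 1) \<and> \<alpha> \<le> (1 / (1 - \<delta>)) * (2 / (L + m) - \<delta> / m)) \<or>
     (0 \<le> \<delta> \<and> \<delta> < 1 \<and> \<alpha> \<ge> (1 / (1 + \<delta>)) * (2 / (L + m) + \<delta> / L)))"
proof -
  have ab: "0 < \<alpha> * m" "\<alpha> * m < \<alpha> * L"
    using assms by simp_all
  obtain \<rho> where "rho_GD m L \<alpha> \<delta> \<le> \<rho>" "certified_rate m L \<alpha> \<delta> \<rho>"
    using ex_certified_rate_ge[of "\<alpha> * m" "\<alpha> * L" \<delta> "rho_GD m L \<alpha> \<delta>"] ab assms
    unfolding certified_rate_scale[of m L \<alpha>] by auto
  then have "rho_star m L \<alpha> \<delta> = rho_GD m L \<alpha> \<delta> \<longleftrightarrow> certified_rate m L \<alpha> \<delta> (rho_GD m L \<alpha> \<delta>)"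
    by (rule rho_star_eq_rho_GD_iff)
  also have "\<dots> \<longleftrightarrow>
      \<alpha> * m * (1 - \<delta>) * (\<alpha> * m + \<alpha> * L - 2) + \<delta> * (\<alpha> * L - \<alpha> * m) \<le> 0 \<or>
      0 \<le> \<alpha> * L * (1 + \<delta>) * (\<alpha> * m + \<alpha> * L - 2) + \<delta> * (\<alpha> * L - \<alpha> * m)"
    unfolding certified_rate_scale[of m L \<alpha>] rho_GD_scale[of m L \<alpha>]
    using ab assms(3,4) by (rule certified_rate_rho_GD_iff)
  also have "\<dots> \<longleftrightarrow>
    ((\<delta> < 2 / (L / m + 1) \<and> \<alpha> \<le> (1 / (1 - \<delta>)) * (2 / (L + m) - \<delta> / m)) \<or>
     (0 \<le> \<delta> \<and> \<delta> < 1 \<and> \<alpha> \<ge> (1 / (1 + \<delta>)) * (2 / (L + m) + \<delta> / L)))"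
    using alpha_le_alpha_minus_iff[of m L \<delta> \<alpha>] alpha_ge_alpha_plus_iff[of m L \<delta> \<alpha>] assms by auto
  finally show ?thesis .
qed

end
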